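(* Let $\Delta$ be a tree with vertices $x_1,\ldots,x_n$, let $k$ be a field, and let $I=\mathcal{F}(\Delta)$ be its facet ideal in $R=k[x_1,\ldots,x_n]$. Then for any prime ideal $p$ of $R$, the facet complex $\Delta_{\mathcal{F}}(I_p)$ is a forest.
   Context: A simplicial complex on a vertex set $V$ is a collection of subsets of $V$ containing all singletons and closed under subsets; its facets are its maximal faces. Vertices are identified with variables. The facet ideal $\mathcal{F}(\Delta)$ is generated by the monomials $\prod_{x_j\in F}x_j$, $F$ a facet. If $I=(M_1,\ldots,M_q)$ with square-free monomials $M_i$, then $I_p$ is generated by the monomials $M_i'$ obtained from $M_i$ by deleting all variables not in $p$ (which are units in $R_p$); the facet complex $\Delta_{\mathcal{F}}(I_p)$ is the simplicial complex whose facets are the supports $\{x_j : x_j\mid M_i'\}$ of the minimal ones among the monomials $M_1',\ldots,M_q'$. A subcomplex of $\Delta$ is a simplicial complex whose facet set is a subset of the facet set of $\Delta$. $\Delta$ is connected if any two facets are joined by a chain of facets with consecutive members intersecting. A facet $F$ is a leaf of $\Delta$ if either $F$ is the only facet, or there is a facet $G\neq F$ with $F\cap F'\subseteq F\cap G$ for every facet $F'\neq F$. A connected $\Delta$ is a tree if every nonempty subcomplex has a leaf. A simplicial complex is a forest if every nonempty subcomplex has a leaf (equivalently, every connected component is a tree). *)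

theory Defs
  imports Main
begin

text \<open>A simplicial complex is represented by its set of facets (a finite antichain of
finite nonempty vertex sets); its vertex set is the union of the facets.
Vertices are identified with the variables of the polynomial ring.\<close>

definition facet_set :: "'a set set \<Rightarrow> bool" where
  "facet_set Fs \<longleftrightarrow> finite Fs \<and> (\<forall>F\<in>Fs. finite F \<and> F \<noteq> {}) \<and>
     (\<forall>F\<in>Fs. \<forall>G\<in>Fs. F \<subseteq> G \<longrightarrow> F = G)"

definition is_leaf :: "'a set set \<Rightarrow> 'a set \<Rightarrow> bool" where
  "is_leaf Fs F \<longleftrightarrow> F \<in> Fs \<and>
     (Fs = {F} \<or> (\<exists>G\<in>Fs. G \<noteq> F \<and> (\<forall>F'\<in>Fs. F' \<noteq> F \<longrightarrow> F \<inter> F' \<subseteq> F \<inter> G)))"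

definition connected_cx :: "'a set set \<Rightarrow> bool" where
  "connected_cx Fs \<longleftrightarrow>
     (\<forall>F\<in>Fs. \<forall>G\<in>Fs. (\<lambda>A B. A \<in> Fs \<and> B \<in> Fs \<and> A \<inter> B \<noteq> {})\<^sup>*\<^sup>* F G)"

definition is_forest :: "'a set set \<Rightarrow> bool" where
  "is_forest Fs \<longleftrightarrow> (\<forall>Gs. Gs \<subseteq> Fs \<and> Gs \<noteq> {} \<longrightarrow> (\<exists>F. is_leaf Gs F))"

definition is_tree :: "'a set set \<Rightarrow> bool" where
  "is_tree Fs \<longleftrightarrow> connected_cx Fs \<and> is_forest Fs"

text \<open>Facet complex of the localization \<open>I_p\<close> of the facet ideal, where P is the set of
variables lying in the prime p: each generator \<open>\<Prod>x\<in>F. x\<close> becomes \<open>\<Prod>x\<in>F\<inter>P. x\<close>,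
and the facets are the supports of the minimal (w.r.t. divisibility, i.e. inclusion
of supports) among these monomials.\<close>
definition loc_facets :: "'a set set \<Rightarrow> 'a set \<Rightarrow> 'a set set" where
  "loc_facets Fs P = {A \<in> (\<lambda>F. F \<inter> P) ` Fs.
      \<forall>B \<in> (\<lambda>F. F \<inter> P) ` Fs. B \<subseteq> A \<longrightarrow> B = A}"

end

theory Submission
  imports Defs
begin

text \<open>Localizing at p replaces every facet F by its trace F \<inter> P on the set P of variables
in p. Traces of a forest again form a forest: a subfamily of traces lifts injectively to a
subfamily of facets, a leaf H of that lift with branch G yields the leaf H \<inter> P with branch
G \<inter> P, since intersecting with P preserves the inclusions defining a leaf. The facets of
the localization are some of these traces, and a subfamily of a forest is a forest.\<close>

lemma is_forest_subset:
  assumes "is_forest Fs" and "Gs \<subseteq> Fs"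
  shows "is_forest Gs"
  using assms unfolding is_forest_def by blast

lemma is_leaf_trace:
  assumes leaf: "is_leaf Hs H" and inj: "inj_on (\<lambda>F. F \<inter> P) Hs"
  shows "is_leaf ((\<lambda>F. F \<inter> P) ` Hs) (H \<inter> P)"
proof -
  have "H \<in> Hs" using leaf unfolding is_leaf_def by blast
  from leaf consider "Hs = {H}"
    | G where "G \<in> Hs" "G \<noteq> H" "\<forall>F'\<in>Hs. F' \<noteq> H \<longrightarrow> H \<inter> F' \<subseteq> H \<inter> G"
    unfolding is_leaf_def by blast
  then show ?thesis
  proof cases
    case 1
    then show ?thesis unfolding is_leaf_def by simp
  next
    case 2
    have "G \<inter> P \<noteq> H \<inter> P"
      using inj_onD[OF inj _ \<open>G \<in> Hs\<close> \<open>H \<in> Hs\<close>] \<open>G \<noteq> H\<close> by blast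
    moreover have "(H \<inter> P) \<inter> (F' \<inter> P) \<subseteq> (H \<inter> P) \<inter> (G \<inter> P)"
      if "F' \<in> Hs" and "F' \<inter> P \<noteq> H \<inter> P" for F'
      using that 2(3) by blast
    ultimately show ?thesis
      using \<open>H \<in> Hs\<close> \<open>G \<in> Hs\<close> unfolding is_leaf_def by blast
  qed
qed

lemma is_forest_trace:
  assumes "is_forest Fs"
  shows "is_forest ((\<lambda>F. F \<inter> P) ` Fs)"
  unfolding is_forest_def
proof (intro allI impI)
  fix Gs assume Gs: "Gs \<subseteq> (\<lambda>F. F \<inter> P) ` Fs \<and> Gs \<noteq> {}"
  then obtain Hs where Hs: "Hs \<subseteq> Fs" "inj_on (\<lambda>F. F \<inter> P) Hs" "Gs = (\<lambda>F. F \<inter> P) ` Hs"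
    by (meson subset_image_inj)
  with Gs have "Hs \<noteq> {}" by blast
  with assms Hs(1) obtain H where "is_leaf Hs H"
    unfolding is_forest_def by blast
  then have "is_leaf Gs (H \<inter> P)"
    using is_leaf_trace Hs(2,3) by blast
  then show "\<exists>F. is_leaf Gs F" ..
qed

lemma loc_facets_subset_trace: "loc_facets Fs P \<subseteq> (\<lambda>F. F \<inter> P) ` Fs"
  unfolding loc_facets_def by blast

theorem mainTheorem5:
  fixes Fs :: "'a set set" and P :: "'a set"
  assumes "facet_set Fs"
    and "is_tree Fs"
    and "P \<subseteq> \<Union>Fs"
  shows "is_forest (loc_facets Fs P)"
proof -
  have "is_forest Fs" using assms(2) unfolding is_tree_def by blast
  then have "is_forest ((\<lambda>F. F \<inter> P) ` Fs)" by (rule is_forest_trace)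
  then show ?thesis using loc_facets_subset_trace by (rule is_forest_subset)
qed

end
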